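(* Let $\mu_0,\mu_1$ be Gaussian measures on $\mathbb{R}$, and let $(X_t)_{t\in[0,1]}$ be a real-valued stochastic process with twice differentiable paths, $X_0\sim\mu_0$, $X_1\sim\mu_1$, such that (1) $X_t$ has a Gaussian distribution for every $t\in[0,1]$, and (2) $\int_0^1\mathbb E[|\ddot X_t|^2]\,dt=0$. Then $(X_0,X_1)$ is jointly Gaussian, i.e. the curve of laws $(\mathrm{law}(X_t))$ is induced by a jointly Gaussian coupling of $\mu_0$ and $\mu_1$. *)

theory Defs
  imports "HOL-Probability.Probability"
begin

definition gaussian_measure :: "real measure \<Rightarrow> bool" where
  "gaussian_measure N \<longleftrightarrow>
     (\<exists>m. N = return borel m) \<or>
     (\<exists>m \<sigma>. \<sigma> > 0 \<and> N = density lborel (normal_density m \<sigma>))"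

definition jointly_gaussian :: "'a measure \<Rightarrow> ('a \<Rightarrow> real) \<Rightarrow> ('a \<Rightarrow> real) \<Rightarrow> bool" where
  "jointly_gaussian M Y Z \<longleftrightarrow>
     (\<forall>a b. gaussian_measure (distr M borel (\<lambda>\<omega>. a * Y \<omega> + b * Z \<omega>)))"

end

(* By Tonelli, the vanishing energy forces the second derivative of almost every path to vanish
   almost everywhere on [0, 1], so almost every path is affine: X t = (1 - t) X 0 + t X 1.
   Hence every convex combination of X 0 and X 1 has a Gaussian law, and after rescaling so does
   X 0 + s X 1 for every s >= 0. The n-th moment of X 0 + s X 1 and the n-th moment of the
   Gaussian with the same mean and variance are both polynomials in s; agreeing for s >= 0, they
   agree for all s. Gaussian laws are determined by their moments, so X 0 + s X 1 is Gaussian for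
   every s, and therefore so is every a X 0 + b X 1. *)

theory Submission
  imports Defs
begin

section \<open>Gaussian laws and their moments\<close>

definition std_normal_moment :: "nat \<Rightarrow> real" where
  "std_normal_moment j = (if even j then fact j / (2 ^ (j div 2) * fact (j div 2)) else 0)"

text \<open>The \<open>n\<close>-th moment of \<open>m + sqrt v * Z\<close> for a standard normal \<open>Z\<close>, written without
  square roots so that it is a polynomial in the mean \<open>m\<close> and the variance \<open>v\<close>.\<close>
definition gauss_moment :: "nat \<Rightarrow> real \<Rightarrow> real \<Rightarrow> real" where
  "gauss_moment n m v =
     (\<Sum>j\<le>n. real (n choose j) * m ^ (n - j) * v ^ (j div 2) * std_normal_moment j)"

definition gauss_measure :: "real \<Rightarrow> real \<Rightarrow> real measure" where
  "gauss_measure m v =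
     (if v = 0 then return borel m else density lborel (normal_density m (sqrt v)))"

lemma gaussian_measure_iff_gauss_measure:
  "gaussian_measure N \<longleftrightarrow> (\<exists>m v. 0 \<le> v \<and> N = gauss_measure m v)"
proof
  assume "gaussian_measure N"
  then show "\<exists>m v. 0 \<le> v \<and> N = gauss_measure m v"
    unfolding gaussian_measure_def
  proof (elim disjE exE conjE)
    fix m assume "N = return borel m"
    then show ?thesis by (metis gauss_measure_def order_refl)
  next
    fix m \<sigma> :: real assume "\<sigma> > 0" "N = density lborel (normal_density m \<sigma>)"
    then have "N = gauss_measure m (\<sigma>\<^sup>2)" by (simp add: gauss_measure_def)
    then show ?thesis by (metis zero_le_power2)
  qed
next
  assume "\<exists>m v. 0 \<le> v \<and> N = gauss_measure m v"
  then show "gaussian_measure N"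
    unfolding gaussian_measure_def gauss_measure_def
    by (metis order_le_less real_sqrt_gt_0_iff)
qed

lemma real_distribution_gauss_measure: "0 \<le> v \<Longrightarrow> real_distribution (gauss_measure m v)"
  by (auto simp: gauss_measure_def real_distribution_def real_distribution_axioms_def
      prob_space_return prob_space_normal_density)

lemma zero_power_half_mult_std_normal_moment:
  "0 ^ (j div 2) * std_normal_moment j = (if j = 0 then 1 else 0)"
  by (cases "j \<le> 1") (auto simp: std_normal_moment_def le_Suc_eq)

lemma gauss_moment_1: "gauss_moment 1 m v = m"
  by (simp add: gauss_moment_def std_normal_moment_def)

lemma gauss_moment_2: "gauss_moment 2 m v = m\<^sup>2 + v"
  by (simp add: gauss_moment_def std_normal_moment_def numeral_2_eq_2 atMost_Suc)

lemma gauss_moment_scale: "gauss_moment n (c * m) (c\<^sup>2 * v) = c ^ n * gauss_moment n m v"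
  unfolding gauss_moment_def sum_distrib_left
proof (rule sum.cong[OF refl])
  fix j assume j: "j \<in> {..n}"
  show "real (n choose j) * (c * m) ^ (n - j) * (c\<^sup>2 * v) ^ (j div 2) * std_normal_moment j =
        c ^ n * (real (n choose j) * m ^ (n - j) * v ^ (j div 2) * std_normal_moment j)"
  proof (cases "even j")
    case True
    then have "c ^ n = c ^ (n - j) * (c\<^sup>2) ^ (j div 2)"
      using j by (simp flip: power_mult power_add)
    then show ?thesis by (simp add: power_mult_distrib)
  qed (simp add: std_normal_moment_def)
qed

lemma has_bochner_integral_normal_central_moment:
  assumes "\<sigma> > 0"
  shows "has_bochner_integral lborel (\<lambda>x. normal_density m \<sigma> x * (x - m) ^ j)
           ((\<sigma>\<^sup>2) ^ (j div 2) * std_normal_moment j)"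
proof (cases "even j")
  case True
  then obtain k where k: "j = 2 * k" by blast
  have "fact (2 * k) / ((2 / \<sigma>\<^sup>2) ^ k * fact k) = (\<sigma>\<^sup>2) ^ (j div 2) * std_normal_moment j"
    using assms k by (simp add: std_normal_moment_def field_simps)
  then show ?thesis using normal_moment_even[OF assms, of m k] k by simp
next
  case False
  then obtain k where "j = 2 * k + 1" using oddE by blast
  then show ?thesis using normal_moment_odd[OF assms, of m k] by (simp add: std_normal_moment_def)
qed

lemma has_bochner_integral_gauss_measure_central_power:
  assumes "0 \<le> v"
  shows "has_bochner_integral (gauss_measure m v) (\<lambda>x. (x - m) ^ j)
           (v ^ (j div 2) * std_normal_moment j)"
proof (cases "v = 0")
  case True
  then show ?thesis
    by (simp add: gauss_measure_def zero_power_half_mult_std_normal_moment has_bochner_integral_iff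
        integrable_iff_bounded nn_integral_return integral_return)
next
  case False
  define \<sigma> where "\<sigma> = sqrt v"
  have \<sigma>: "\<sigma> > 0" "\<sigma>\<^sup>2 = v" using assms False by (auto simp: \<sigma>_def)
  have "has_bochner_integral (density lborel (normal_density m \<sigma>)) (\<lambda>x. (x - m) ^ j)
      (v ^ (j div 2) * std_normal_moment j)"
    using has_bochner_integral_normal_central_moment[OF \<sigma>(1)]
    by (intro has_bochner_integral_density) (auto simp: \<sigma>(2))
  then show ?thesis
    using False by (simp add: gauss_measure_def \<sigma>_def)
qed

lemma has_bochner_integral_gauss_measure_power:
  assumes "0 \<le> v"
  shows "has_bochner_integral (gauss_measure m v) (\<lambda>x. x ^ n) (gauss_moment n m v)"
proof -
  have binomial: "x ^ n = (\<Sum>j\<le>n. real (n choose j) * m ^ (n - j) * (x - m) ^ j)" for x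
  proof -
    have "x ^ n = ((x - m) + m) ^ n" by simp
    also have "\<dots> = (\<Sum>j\<le>n. real (n choose j) * (x - m) ^ j * m ^ (n - j))"
      by (rule binomial_ring)
    finally show ?thesis by (simp add: ac_simps)
  qed
  show ?thesis
    unfolding binomial gauss_moment_def mult.assoc[of _ "_ ^ (_ div 2)"]
    by (intro has_bochner_integral_sum has_bochner_integral_mult_right
        has_bochner_integral_gauss_measure_central_power assms)
qed

lemma integrable_gauss_measure_power: "0 \<le> v \<Longrightarrow> integrable (gauss_measure m v) (\<lambda>x. x ^ n)"
  by (rule integrable.intros[OF has_bochner_integral_gauss_measure_power])

lemma integral_gauss_measure_power:
  "0 \<le> v \<Longrightarrow> (\<integral>x. x ^ n \<partial>gauss_measure m v) = gauss_moment n m v"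
  by (rule has_bochner_integral_integral_eq[OF has_bochner_integral_gauss_measure_power])

lemma abs_add_power_le: "\<bar>a + b\<bar> ^ n \<le> 2 ^ n * (\<bar>a\<bar> ^ n + \<bar>b\<bar> ^ n)" for a b :: real
proof -
  have "\<bar>a + b\<bar> ^ n \<le> (2 * max \<bar>a\<bar> \<bar>b\<bar>) ^ n"
    by (rule power_mono) (auto simp: max_def)
  also have "\<dots> = 2 ^ n * max \<bar>a\<bar> \<bar>b\<bar> ^ n" by (simp add: power_mult_distrib)
  also have "max \<bar>a\<bar> \<bar>b\<bar> ^ n \<le> \<bar>a\<bar> ^ n + \<bar>b\<bar> ^ n" by (simp add: max_def)
  finally show ?thesis by simp
qed

lemma power_div_fact_LIMSEQ_zero: "(\<lambda>n. x ^ n / fact n) \<longlonglongrightarrow> 0" for x :: real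
  using summable_LIMSEQ_zero[OF summable_exp[of x]] by (simp add: field_simps)

lemma gauss_moment_even_nonneg: "0 \<le> v \<Longrightarrow> 0 \<le> gauss_moment (2 * k) m v"
  by (metis integral_gauss_measure_power integral_nonneg_AE zero_le_power_eq AE_I2 even_mult_iff even_numeral)

lemma gauss_moment_even_le:
  assumes "0 \<le> v"
  shows "gauss_moment (2 * k) m v \<le> 2 ^ (2 * k) * (m ^ (2 * k) + v ^ k * std_normal_moment (2 * k))"
proof -
  interpret real_distribution "gauss_measure m v"
    using assms by (rule real_distribution_gauss_measure)
  have central: "has_bochner_integral (gauss_measure m v) (\<lambda>x. (x - m) ^ (2 * k))
      (v ^ k * std_normal_moment (2 * k))"
    using has_bochner_integral_gauss_measure_central_power[OF assms, of m "2 * k"] by simp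
  have "gauss_moment (2 * k) m v = (\<integral>x. x ^ (2 * k) \<partial>gauss_measure m v)"
    using assms by (simp add: integral_gauss_measure_power)
  also have "\<dots> \<le> (\<integral>x. 2 ^ (2 * k) * ((x - m) ^ (2 * k) + m ^ (2 * k)) \<partial>gauss_measure m v)"
  proof (rule integral_mono)
    fix x
    have "x ^ (2 * k) = \<bar>(x - m) + m\<bar> ^ (2 * k)" by (simp add: power_even_abs)
    also have "\<dots> \<le> 2 ^ (2 * k) * ((x - m) ^ (2 * k) + m ^ (2 * k))"
      using abs_add_power_le[of "x - m" m "2 * k"] by (simp add: power_even_abs)
    finally show "x ^ (2 * k) \<le> 2 ^ (2 * k) * ((x - m) ^ (2 * k) + m ^ (2 * k))" .
  qed (use assms central in \<open>auto intro: integrable_gauss_measure_power integrable.intros\<close>)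
  also have "\<dots> = 2 ^ (2 * k) * (v ^ k * std_normal_moment (2 * k) + m ^ (2 * k))"
    using central prob_space by (simp add: has_bochner_integral_iff)
  finally show ?thesis by (simp add: add.commute)
qed

lemma gauss_moment_even_series_LIMSEQ_zero:
  assumes "0 \<le> v"
  shows "(\<lambda>k. \<bar>t\<bar> ^ (2 * k) / fact (2 * k) * gauss_moment (2 * k) m v) \<longlonglongrightarrow> 0"
proof (rule Lim_null_comparison)
  let ?g = "\<lambda>k. (2 * \<bar>t\<bar> * \<bar>m\<bar>) ^ (2 * k) / fact (2 * k) + (2 * t\<^sup>2 * v) ^ k / fact k"
  show "\<forall>\<^sub>F k in sequentially. norm (\<bar>t\<bar> ^ (2 * k) / fact (2 * k) * gauss_moment (2 * k) m v) \<le> ?g k"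
  proof (intro always_eventually allI)
    fix k
    have "norm (\<bar>t\<bar> ^ (2 * k) / fact (2 * k) * gauss_moment (2 * k) m v) =
        \<bar>t\<bar> ^ (2 * k) / fact (2 * k) * gauss_moment (2 * k) m v"
      using gauss_moment_even_nonneg[OF assms] by simp
    also have "\<dots> \<le> \<bar>t\<bar> ^ (2 * k) / fact (2 * k) *
        (2 ^ (2 * k) * (m ^ (2 * k) + v ^ k * std_normal_moment (2 * k)))"
      by (intro mult_left_mono gauss_moment_even_le assms) auto
    also have "\<dots> = (\<bar>t\<bar> ^ (2 * k) * 2 ^ (2 * k) * m ^ (2 * k)) / fact (2 * k) +
        (\<bar>t\<bar> ^ (2 * k) * 2 ^ (2 * k) * v ^ k / 2 ^ k) / fact k"
      by (simp add: std_normal_moment_def field_simps)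
    also have "\<dots> = ?g k"
    proof -
      have "(2::real) ^ (2 * k) = 2 ^ k * 2 ^ k" by (simp add: mult_2 power_add)
      then have "\<bar>t\<bar> ^ (2 * k) * 2 ^ (2 * k) * v ^ k / 2 ^ k = (2 * t\<^sup>2 * v) ^ k"
        by (simp add: power_even_abs power_mult power_mult_distrib)
      moreover have "\<bar>t\<bar> ^ (2 * k) * 2 ^ (2 * k) * m ^ (2 * k) = (2 * \<bar>t\<bar> * \<bar>m\<bar>) ^ (2 * k)"
        by (simp add: power_mult_distrib power_even_abs)
      ultimately show ?thesis by simp
    qed
    finally show "norm (\<bar>t\<bar> ^ (2 * k) / fact (2 * k) * gauss_moment (2 * k) m v) \<le> ?g k" .
  qed
  have "(\<lambda>k. (2 * \<bar>t\<bar> * \<bar>m\<bar>) ^ (2 * k) / fact (2 * k)) \<longlonglongrightarrow> 0"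
    using LIMSEQ_subseq_LIMSEQ[OF power_div_fact_LIMSEQ_zero, of "\<lambda>k. 2 * k"]
    by (simp add: strict_mono_def o_def)
  then show "?g \<longlonglongrightarrow> 0"
    using tendsto_add[OF _ power_div_fact_LIMSEQ_zero[of "2 * t\<^sup>2 * v"]] by simp
qed

text \<open>Gaussian laws are determined by their moments: on both sides the characteristic function
  is approximated by the same Taylor polynomials, with errors bounded by the even moments.\<close>
lemma gauss_measure_eq_if_moments:
  assumes \<mu>: "real_distribution \<mu>" and v: "0 \<le> v"
    and int: "\<And>n. integrable \<mu> (\<lambda>x. x ^ n)"
    and mom: "\<And>n. (\<integral>x. x ^ n \<partial>\<mu>) = gauss_moment n m v"
  shows "\<mu> = gauss_measure m v"
proof -
  interpret \<mu>: real_distribution \<mu> by (rule \<mu>)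
  interpret G: real_distribution "gauss_measure m v" by (rule real_distribution_gauss_measure[OF v])
  have "char \<mu> t = char (gauss_measure m v) t" for t
  proof -
    define S where "S k = (\<Sum>j\<le>2 * k. (\<i> * t) ^ j / fact j * complex_of_real (gauss_moment j m v))" for k
    define B where "B k = 2 * \<bar>t\<bar> ^ (2 * k) / fact (2 * k) * gauss_moment (2 * k) m v" for k
    have \<mu>_approx: "cmod (char \<mu> t - S k) \<le> B k" for k
      using \<mu>.char_approx1[of "2 * k" t] int mom[of "2 * k"]
      by (simp add: S_def B_def mom power_even_abs)
    have G_approx: "cmod (char (gauss_measure m v) t - S k) \<le> B k" for k
      using G.char_approx1[of "2 * k" t] v
      by (simp add: S_def B_def integrable_gauss_measure_power integral_gauss_measure_power power_even_abs)
    have bound: "cmod (char \<mu> t - char (gauss_measure m v) t) \<le> 2 * B k" for k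
      using norm_triangle_ineq4[of "char \<mu> t - S k" "char (gauss_measure m v) t - S k"]
        \<mu>_approx[of k] G_approx[of k] by simp
    have "(\<lambda>k. 2 * B k) \<longlonglongrightarrow> 0"
      using tendsto_mult_right_zero[OF gauss_moment_even_series_LIMSEQ_zero[OF v, of t m], of 4]
      by (simp add: B_def)
    then have "cmod (char \<mu> t - char (gauss_measure m v) t) \<le> 0"
      by (rule LIMSEQ_le_const) (use bound in blast)
    then show ?thesis by simp
  qed
  then show ?thesis
    by (intro Levy_uniqueness \<mu> real_distribution_gauss_measure v) auto
qed

section \<open>Linear combinations of random variables with Gaussian laws\<close>

lemma real_polynomial_function_eq_0_if_infinite_zeros:
  fixes f :: "real \<Rightarrow> real"
  assumes "real_polynomial_function f" and "infinite S" and "\<And>x. x \<in> S \<Longrightarrow> f x = 0"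
  shows "f x = 0"
proof -
  obtain a n where f: "f = (\<lambda>x. \<Sum>i\<le>n. a i * x ^ i)"
    using assms(1) real_polynomial_function_iff_sum by blast
  have "infinite {x. f x = 0}"
    using assms(3) by (intro infinite_super[OF _ assms(2)]) blast
  then have "\<forall>k\<le>n. a k = 0"
    unfolding f using polyfun_rootbound_finite[of n a] by blast
  then show ?thesis unfolding f by simp
qed

lemma abs_power_mult_power_le: "\<bar>x ^ i * y ^ k\<bar> \<le> \<bar>x\<bar> ^ (i + k) + \<bar>y\<bar> ^ (i + k)" for x y :: real
proof -
  define c where "c = max \<bar>x\<bar> \<bar>y\<bar>"
  have "\<bar>x ^ i * y ^ k\<bar> = \<bar>x\<bar> ^ i * \<bar>y\<bar> ^ k" by (simp add: abs_mult power_abs)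
  also have "\<dots> \<le> c ^ i * c ^ k" unfolding c_def by (intro mult_mono power_mono) auto
  also have "\<dots> = c ^ (i + k)" by (simp add: power_add)
  also have "\<dots> \<le> \<bar>x\<bar> ^ (i + k) + \<bar>y\<bar> ^ (i + k)" unfolding c_def by (simp add: max_def)
  finally show ?thesis .
qed

lemma integrable_power_mult_power:
  fixes X Y :: "'a \<Rightarrow> real"
  assumes "X \<in> borel_measurable M" and "Y \<in> borel_measurable M"
    and "\<And>n. integrable M (\<lambda>\<omega>. X \<omega> ^ n)" and "\<And>n. integrable M (\<lambda>\<omega>. Y \<omega> ^ n)"
  shows "integrable M (\<lambda>\<omega>. X \<omega> ^ i * Y \<omega> ^ k)"
proof (rule Bochner_Integration.integrable_bound)
  show "integrable M (\<lambda>\<omega>. \<bar>X \<omega>\<bar> ^ (i + k) + \<bar>Y \<omega>\<bar> ^ (i + k))"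
    unfolding power_abs[symmetric] using assms(3,4) by (intro Bochner_Integration.integrable_add integrable_abs)
  show "AE \<omega> in M. norm (X \<omega> ^ i * Y \<omega> ^ k) \<le> norm (\<bar>X \<omega>\<bar> ^ (i + k) + \<bar>Y \<omega>\<bar> ^ (i + k))"
    using abs_power_mult_power_le by (intro AE_I2) (auto intro: order.trans[OF _ abs_ge_self])
qed (use assms(1,2) in measurable)

lemma real_polynomial_function_gauss_moment:
  assumes "real_polynomial_function f" and "real_polynomial_function g"
  shows "real_polynomial_function (\<lambda>s. gauss_moment n (f s) (g s))"
  unfolding gauss_moment_def
  using assms by (intro real_polynomial_function_sum real_polynomial_function.intros(4)
      real_polynomial_function.intros(2) real_polynomial_function_power) auto

lemma
  fixes X Y :: "'a \<Rightarrow> real"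
  assumes mixed: "\<And>i k. integrable M (\<lambda>\<omega>. X \<omega> ^ i * Y \<omega> ^ k)"
  shows integrable_add_mult_power: "integrable M (\<lambda>\<omega>. (X \<omega> + s * Y \<omega>) ^ n)"
    and integral_add_mult_power: "(\<integral>\<omega>. (X \<omega> + s * Y \<omega>) ^ n \<partial>M) =
      (\<Sum>k\<le>n. real (n choose k) * s ^ k * (\<integral>\<omega>. X \<omega> ^ (n - k) * Y \<omega> ^ k \<partial>M))"
proof -
  have binomial: "(\<lambda>\<omega>. (X \<omega> + s * Y \<omega>) ^ n) =
      (\<lambda>\<omega>. \<Sum>k\<le>n. real (n choose k) * s ^ k * (X \<omega> ^ (n - k) * Y \<omega> ^ k))"
    by (subst add.commute, subst binomial_ring) (simp add: power_mult_distrib ac_simps)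
  show "integrable M (\<lambda>\<omega>. (X \<omega> + s * Y \<omega>) ^ n)"
    unfolding binomial by (intro Bochner_Integration.integrable_sum integrable_mult_right mixed)
  show "(\<integral>\<omega>. (X \<omega> + s * Y \<omega>) ^ n \<partial>M) =
      (\<Sum>k\<le>n. real (n choose k) * s ^ k * (\<integral>\<omega>. X \<omega> ^ (n - k) * Y \<omega> ^ k \<partial>M))"
    unfolding binomial by (subst Bochner_Integration.integral_sum) (auto intro: mixed)
qed

lemma real_polynomial_function_integral_add_mult_power:
  fixes X Y :: "'a \<Rightarrow> real"
  assumes "\<And>i k. integrable M (\<lambda>\<omega>. X \<omega> ^ i * Y \<omega> ^ k)"
  shows "real_polynomial_function (\<lambda>s. \<integral>\<omega>. (X \<omega> + s * Y \<omega>) ^ n \<partial>M)"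
  unfolding integral_add_mult_power[OF assms]
  by (intro real_polynomial_function_sum real_polynomial_function.intros(4)
      real_polynomial_function.intros(2) real_polynomial_function_power
      real_polynomial_function.intros(1) bounded_linear_ident finite_atMost)

context prob_space
begin

lemma
  assumes Y: "Y \<in> borel_measurable M" and G: "gaussian_measure (distr M borel Y)"
  shows integrable_power_if_gaussian_law: "integrable M (\<lambda>\<omega>. Y \<omega> ^ n)"
    and expectation_power_if_gaussian_law:
      "expectation (\<lambda>\<omega>. Y \<omega> ^ n) = gauss_moment n (expectation Y) (variance Y)"
proof -
  obtain m v where v: "0 \<le> v" and law: "distr M borel Y = gauss_measure m v"
    using G gaussian_measure_iff_gauss_measure by blast
  have int: "integrable M (\<lambda>\<omega>. Y \<omega> ^ k)" for k
    using integrable_distr_eq[OF Y, of "\<lambda>x. x ^ k"] law integrable_gauss_measure_power[OF v] by simp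
  have exp: "expectation (\<lambda>\<omega>. Y \<omega> ^ k) = gauss_moment k m v" for k
    using integral_distr[OF Y, of "\<lambda>x. x ^ k"] law integral_gauss_measure_power[OF v] by simp
  have "expectation Y = m" using exp[of 1] gauss_moment_1[of m v] by simp
  moreover have "variance Y = v"
    using variance_eq[of Y] int[of 1] int[of 2] exp[of 1] exp[of 2] gauss_moment_1[of m v]
    by (simp add: gauss_moment_2)
  ultimately show "integrable M (\<lambda>\<omega>. Y \<omega> ^ n)"
    and "expectation (\<lambda>\<omega>. Y \<omega> ^ n) = gauss_moment n (expectation Y) (variance Y)"
    using int exp by simp_all
qed

lemma gaussian_law_if_moments:
  assumes Y: "Y \<in> borel_measurable M"
    and int: "\<And>n. integrable M (\<lambda>\<omega>. Y \<omega> ^ n)"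
    and mom: "\<And>n. expectation (\<lambda>\<omega>. Y \<omega> ^ n) = gauss_moment n (expectation Y) (variance Y)"
  shows "gaussian_measure (distr M borel Y)"
proof -
  have "distr M borel Y = gauss_measure (expectation Y) (variance Y)"
  proof (rule gauss_measure_eq_if_moments[OF _ variance_positive])
    show "real_distribution (distr M borel Y)" using Y by simp
    show "integrable (distr M borel Y) (\<lambda>x. x ^ n)" for n
      using integrable_distr_eq[OF Y, of "\<lambda>x. x ^ n"] int by simp
    show "(\<integral>x. x ^ n \<partial>distr M borel Y) = gauss_moment n (expectation Y) (variance Y)" for n
      using integral_distr[OF Y, of "\<lambda>x. x ^ n"] mom by simp
  qed
  then show ?thesis
    using gaussian_measure_iff_gauss_measure variance_positive by blast
qed

lemma gaussian_law_scale:
  assumes Y: "Y \<in> borel_measurable M" and G: "gaussian_measure (distr M borel Y)"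
  shows "gaussian_measure (distr M borel (\<lambda>\<omega>. c * Y \<omega>))"
proof (rule gaussian_law_if_moments)
  show "(\<lambda>\<omega>. c * Y \<omega>) \<in> borel_measurable M" using Y by measurable
  show "integrable M (\<lambda>\<omega>. (c * Y \<omega>) ^ n)" for n
    using integrable_power_if_gaussian_law[OF Y G, of n] by (simp add: power_mult_distrib)
  have mean: "expectation (\<lambda>\<omega>. c * Y \<omega>) = c * expectation Y" by simp
  have var: "variance (\<lambda>\<omega>. c * Y \<omega>) = c\<^sup>2 * variance Y"
    unfolding mean by (simp add: power_mult_distrib flip: right_diff_distrib)
  show "expectation (\<lambda>\<omega>. (c * Y \<omega>) ^ n) =
      gauss_moment n (expectation (\<lambda>\<omega>. c * Y \<omega>)) (variance (\<lambda>\<omega>. c * Y \<omega>))" for n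
    using expectation_power_if_gaussian_law[OF Y G, of n] var unfolding mean
    by (simp add: power_mult_distrib gauss_moment_scale)
qed

lemma gaussian_law_add_mult_if_nonneg:
  assumes X: "X \<in> borel_measurable M" and Y: "Y \<in> borel_measurable M"
    and GY: "gaussian_measure (distr M borel Y)"
    and G: "\<And>s. 0 \<le> s \<Longrightarrow> gaussian_measure (distr M borel (\<lambda>\<omega>. X \<omega> + s * Y \<omega>))"
  shows "gaussian_measure (distr M borel (\<lambda>\<omega>. X \<omega> + s * Y \<omega>))"
proof -
  have "integrable M (\<lambda>\<omega>. X \<omega> ^ n)" for n
    using integrable_power_if_gaussian_law[OF X, of n] G[of 0] by simp
  moreover have "integrable M (\<lambda>\<omega>. Y \<omega> ^ n)" for n
    using integrable_power_if_gaussian_law[OF Y GY] .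
  ultimately have mixed: "integrable M (\<lambda>\<omega>. X \<omega> ^ i * Y \<omega> ^ k)" for i k
    using X Y by (intro integrable_power_mult_power)
  note int = integrable_add_mult_power[OF mixed]
  have var: "variance (\<lambda>\<omega>. X \<omega> + s * Y \<omega>) =
      expectation (\<lambda>\<omega>. (X \<omega> + s * Y \<omega>) ^ 2) - (expectation (\<lambda>\<omega>. (X \<omega> + s * Y \<omega>) ^ 1))\<^sup>2" for s
    using variance_eq int[of s 1] int[of s 2] by simp
  \<comment> \<open>Both sides of the moment identity for \<open>X + s * Y\<close> are polynomials in \<open>s\<close>.\<close>
  define D where "D n s = expectation (\<lambda>\<omega>. (X \<omega> + s * Y \<omega>) ^ n) -
      gauss_moment n (expectation (\<lambda>\<omega>. (X \<omega> + s * Y \<omega>) ^ 1)) (variance (\<lambda>\<omega>. X \<omega> + s * Y \<omega>))"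
    for n s
  have "real_polynomial_function (D n)" for n
    unfolding D_def var
    by (intro real_polynomial_function_diff real_polynomial_function_gauss_moment
        real_polynomial_function_power real_polynomial_function_integral_add_mult_power mixed)
  moreover have "D n s = 0" if "0 \<le> s" for n s
    using expectation_power_if_gaussian_law[OF _ G[OF that]] X Y by (simp add: D_def)
  ultimately have "D n s = 0" for n
    by (rule real_polynomial_function_eq_0_if_infinite_zeros[OF _ infinite_Ici]) simp
  then show ?thesis
    using X Y by (intro gaussian_law_if_moments int) (auto simp: D_def)
qed

lemma gaussian_law_lincomb_if_convex_combinations:
  assumes X0: "X0 \<in> borel_measurable M" and X1: "X1 \<in> borel_measurable M"
    and G: "\<And>t. t \<in> {0..1} \<Longrightarrow>
      gaussian_measure (distr M borel (\<lambda>\<omega>. (1 - t) * X0 \<omega> + t * X1 \<omega>))"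
  shows "gaussian_measure (distr M borel (\<lambda>\<omega>. a * X0 \<omega> + b * X1 \<omega>))"
proof -
  have G1: "gaussian_measure (distr M borel X1)" using G[of 1] by simp
  have "gaussian_measure (distr M borel (\<lambda>\<omega>. X0 \<omega> + s * X1 \<omega>))" if "0 \<le> s" for s
  proof -
    define t where "t = s / (1 + s)"
    have t: "t \<in> {0..1}" using that by (auto simp: t_def)
    have "(1 + s) * (1 - t) = 1" "(1 + s) * t = s" using that by (auto simp: t_def field_simps)
    then have "(\<lambda>\<omega>. (1 + s) * ((1 - t) * X0 \<omega> + t * X1 \<omega>)) = (\<lambda>\<omega>. X0 \<omega> + s * X1 \<omega>)"
      by (simp add: distrib_left flip: mult.assoc)
    then show ?thesis
      using gaussian_law_scale[OF _ G[OF t], of "1 + s"] X0 X1 by simp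
  qed
  then have G_all: "gaussian_measure (distr M borel (\<lambda>\<omega>. X0 \<omega> + s * X1 \<omega>))" for s
    by (rule gaussian_law_add_mult_if_nonneg[OF X0 X1 G1])
  show ?thesis
  proof (cases "a = 0")
    case True
    then show ?thesis using gaussian_law_scale[OF X1 G1, of b] by simp
  next
    case False
    then have "(\<lambda>\<omega>. a * (X0 \<omega> + b / a * X1 \<omega>)) = (\<lambda>\<omega>. a * X0 \<omega> + b * X1 \<omega>)"
      by (auto simp: field_simps)
    then show ?thesis
      using gaussian_law_scale[OF _ G_all[of "b / a"], of a] X0 X1 by simp
  qed
qed

end

section \<open>Paths with vanishing acceleration\<close>

lemma has_real_derivative_zero_ae_imp_constant:
  fixes g g' :: "real \<Rightarrow> real"
  assumes d: "\<And>t. t \<in> {a..b} \<Longrightarrow> (g has_real_derivative g' t) (at t within {a..b})"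
    and N: "negligible N" and z: "\<And>t. t \<in> {a..b} - N \<Longrightarrow> g' t = 0"
    and t: "t \<in> {a..b}"
  shows "g t = g a"
proof -
  have "(g' has_integral (g t - g a)) {a..t}"
  proof (rule fundamental_theorem_of_calculus)
    show "a \<le> t" using t by simp
    fix x assume "x \<in> {a..t}"
    then have "x \<in> {a..b}" using t by auto
    then have "(g has_vector_derivative g' x) (at x within {a..b})"
      using d by (simp add: has_real_derivative_iff_has_vector_derivative)
    then show "(g has_vector_derivative g' x) (at x within {a..t})"
      by (rule has_vector_derivative_within_subset) (use t in auto)
  qed
  moreover have "(g' has_integral 0) {a..t}"
  proof (rule has_integral_spike[OF N])
    show "((\<lambda>_. 0) has_integral 0) {a..t}" by simp
    fix x assume "x \<in> {a..t} - N"
    then show "g' x = 0" using z t by auto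
  qed
  ultimately show ?thesis
    using has_integral_unique by (metis eq_iff_diff_eq_0)
qed

lemma affine_if_second_derivative_zero_ae:
  fixes f f' f'' :: "real \<Rightarrow> real"
  assumes d1: "\<And>t. t \<in> {0..1} \<Longrightarrow> (f has_real_derivative f' t) (at t within {0..1})"
    and d2: "\<And>t. t \<in> {0..1} \<Longrightarrow> (f' has_real_derivative f'' t) (at t within {0..1})"
    and z: "AE t in lborel. t \<in> {0..1} \<longrightarrow> f'' t = 0"
    and t: "t \<in> {0..1}"
  shows "f t = (1 - t) * f 0 + t * f 1"
proof -
  obtain N where N: "{t \<in> space lborel. \<not> (t \<in> {0..1} \<longrightarrow> f'' t = 0)} \<subseteq> N" "N \<in> null_sets lborel"
    using z by (rule AE_E) blast
  then have "negligible N" by (simp add: negligible_iff_null_sets null_sets_completionI)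
  then have f'_const: "f' s = f' 0" if "s \<in> {0..1}" for s
    using has_real_derivative_zero_ae_imp_constant[OF d2 _ _ that] N(1) by auto
  define g where "g s = f s - s * f' 0" for s
  have "(g has_real_derivative 0) (at s within {0..1})" if "s \<in> {0..1}" for s
    using DERIV_diff[OF d1[OF that] DERIV_cmult_right[OF DERIV_ident, of "f' 0"]] f'_const[OF that]
    unfolding g_def by simp
  then have "g s = g 0" if "s \<in> {0..1}" for s
    by (rule has_real_derivative_zero_ae_imp_constant[OF _ negligible_empty _ that]) auto
  from this[OF t] this[of 1] show ?thesis by (simp add: g_def algebra_simps)
qed

text \<open>Paths are only given on \<open>[0, 1]\<close>; precomposing with \<open>clamp 0 1\<close> extends them to the
  whole line, so that they become functions on \<open>lborel \<Otimes>\<^sub>M M\<close>, where Tonelli applies.\<close>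

lemma clamp_in_unit_interval [simp]: "clamp 0 1 t \<in> {0..1::real}"
  using clamp_in_interval[of 0 1 t] by (simp add: cbox_interval)

lemma clamp_eq_self [simp]: "t \<in> {0..1} \<Longrightarrow> clamp 0 1 t = (t::real)"
  by (simp add: cbox_interval)

lemma borel_measurable_clamp [measurable]: "clamp 0 (1::real) \<in> borel_measurable borel"
  using clamp_continuous_on[of 0 1 "\<lambda>x. x" UNIV] by (intro borel_measurable_continuous_onI) simp

lemma ceiling_grid_LIMSEQ: "(\<lambda>n. real_of_int \<lceil>real (Suc n) * t\<rceil> / real (Suc n)) \<longlonglongrightarrow> t"
proof (rule tendsto_sandwich[where f="\<lambda>n. t" and h="\<lambda>n. t + inverse (real (Suc n))"])
  show "\<forall>\<^sub>F n in sequentially. t \<le> real_of_int \<lceil>real (Suc n) * t\<rceil> / real (Suc n)"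
    using le_of_int_ceiling by (intro always_eventually allI) (simp add: field_simps del: of_nat_Suc)
  show "\<forall>\<^sub>F n in sequentially. real_of_int \<lceil>real (Suc n) * t\<rceil> / real (Suc n) \<le> t + inverse (real (Suc n))"
  proof (intro always_eventually allI)
    fix n
    have "real_of_int \<lceil>real (Suc n) * t\<rceil> \<le> real (Suc n) * t + 1"
      using ceiling_correct[of "real (Suc n) * t"] by linarith
    then show "real_of_int \<lceil>real (Suc n) * t\<rceil> / real (Suc n) \<le> t + inverse (real (Suc n))"
      by (simp add: field_simps del: of_nat_Suc)
  qed
  show "(\<lambda>n. t + inverse (real (Suc n))) \<longlonglongrightarrow> t"
    using tendsto_add[OF tendsto_const LIMSEQ_inverse_real_of_nat, of t] by simp
qed simp

lemma measurable_clamped_continuous_process: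
  fixes F :: "real \<Rightarrow> 'a \<Rightarrow> real"
  assumes meas: "\<And>t. t \<in> {0..1} \<Longrightarrow> F t \<in> borel_measurable M"
    and cont: "\<And>\<omega>. \<omega> \<in> space M \<Longrightarrow> continuous_on {0..1} (\<lambda>s. F s \<omega>)"
  shows "(\<lambda>p. F (clamp 0 1 (fst p)) (snd p)) \<in> borel_measurable (lborel \<Otimes>\<^sub>M M)"
proof (rule borel_measurable_LIMSEQ_real)
  let ?grid = "\<lambda>n t. real_of_int \<lceil>real (Suc n) * t\<rceil> / real (Suc n)"
  show "(\<lambda>p. F (clamp 0 1 (?grid n (fst p))) (snd p)) \<in> borel_measurable (lborel \<Otimes>\<^sub>M M)" for n
  proof (rule measurable_compose_countable[where f="\<lambda>i p. F (clamp 0 1 (real_of_int i / real (Suc n))) (snd p)"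
        and g="\<lambda>p. \<lceil>real (Suc n) * fst p\<rceil>"])
    show "(\<lambda>p. F (clamp 0 1 (real_of_int i / real (Suc n))) (snd p)) \<in> borel_measurable (lborel \<Otimes>\<^sub>M M)"
      for i :: int
      using measurable_compose[OF measurable_snd meas[OF clamp_in_unit_interval]] by simp
    show "(\<lambda>p. \<lceil>real (Suc n) * fst p\<rceil>) \<in> measurable (lborel \<Otimes>\<^sub>M M) (count_space UNIV)"
      by (rule measurable_compose[OF _ measurable_real_ceiling]) measurable
  qed
  fix p :: "real \<times> 'a" assume "p \<in> space (lborel \<Otimes>\<^sub>M M)"
  then have "continuous_on {0..1} (\<lambda>s. F s (snd p))"
    by (intro cont) (auto simp: space_pair_measure)
  then have "continuous_on UNIV (\<lambda>s. F (clamp 0 1 s) (snd p))"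
    by (intro clamp_continuous_on) (simp add: cbox_interval)
  then show "(\<lambda>n. F (clamp 0 1 (?grid n (fst p))) (snd p)) \<longlonglongrightarrow> F (clamp 0 1 (fst p)) (snd p)"
    by (rule continuous_on_tendsto_compose[OF _ ceiling_grid_LIMSEQ]) auto
qed

text \<open>The derivatives are one-sided at the endpoints, so difference quotients are taken
  towards the interior.\<close>
definition inward_step :: "nat \<Rightarrow> real \<Rightarrow> real" where
  "inward_step n u = (if u \<le> 1/2 then u + 1 / real (n + 2) else u - 1 / real (n + 2))"

lemma borel_measurable_inward_step [measurable]: "inward_step n \<in> borel_measurable borel"
  unfolding inward_step_def by measurable

lemma inward_step_in_unit_interval: "u \<in> {0..1} \<Longrightarrow> inward_step n u \<in> {0..1}"
proof -
  assume "u \<in> {0..1}"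
  moreover define d where "d = 1 / real (n + 2)"
  moreover have "0 < d" "d \<le> 1/2" by (simp_all add: d_def field_simps)
  ultimately show ?thesis unfolding inward_step_def d_def[symmetric] by auto
qed

lemma filterlim_inward_step:
  assumes "u \<in> {0..1}"
  shows "filterlim (\<lambda>n. inward_step n u) (at u within {0..1}) sequentially"
proof -
  have "(\<lambda>n. 1 / real (n + 2)) \<longlonglongrightarrow> 0"
    using LIMSEQ_Suc[OF LIMSEQ_Suc[OF lim_const_over_n[of 1]]] by (simp add: add.commute)
  from tendsto_add[OF tendsto_const this, of u] tendsto_diff[OF tendsto_const this, of u]
  have "(\<lambda>n. inward_step n u) \<longlonglongrightarrow> u"
    unfolding inward_step_def by (cases "u \<le> 1/2") simp_all
  moreover have "inward_step n u \<in> {0..1} - {u}" for n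
    using inward_step_in_unit_interval[OF assms] by (auto simp: inward_step_def)
  ultimately show ?thesis
    unfolding filterlim_at by (auto intro: always_eventually)
qed

lemma measurable_clamped_derivative:
  fixes F G :: "real \<Rightarrow> 'a \<Rightarrow> real"
  assumes F: "(\<lambda>p. F (clamp 0 1 (fst p)) (snd p)) \<in> borel_measurable (lborel \<Otimes>\<^sub>M M)"
    and der: "\<And>\<omega> t. \<omega> \<in> space M \<Longrightarrow> t \<in> {0..1} \<Longrightarrow>
      ((\<lambda>s. F s \<omega>) has_real_derivative G t \<omega>) (at t within {0..1})"
  shows "(\<lambda>p. G (clamp 0 1 (fst p)) (snd p)) \<in> borel_measurable (lborel \<Otimes>\<^sub>M M)"
proof (rule borel_measurable_LIMSEQ_real)
  let ?u = "\<lambda>p :: real \<times> 'a. clamp 0 1 (fst p)"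
  let ?v = "\<lambda>n p. inward_step n (?u p)"
  show "(\<lambda>p. (F (clamp 0 1 (?v n p)) (snd p) - F (?u p) (snd p)) / (?v n p - ?u p))
      \<in> borel_measurable (lborel \<Otimes>\<^sub>M M)" for n
  proof -
    have u: "?u \<in> borel_measurable (lborel \<Otimes>\<^sub>M M)"
      by (rule measurable_compose[OF measurable_fst]) simp
    then have v: "?v n \<in> borel_measurable (lborel \<Otimes>\<^sub>M M)"
      using measurable_compose[OF _ borel_measurable_inward_step] by blast
    then have "(\<lambda>p. (?v n p, snd p)) \<in> measurable (lborel \<Otimes>\<^sub>M M) (lborel \<Otimes>\<^sub>M M)"
      by (intro measurable_Pair) simp_all
    from measurable_compose[OF this F]
    have "(\<lambda>p. F (clamp 0 1 (?v n p)) (snd p)) \<in> borel_measurable (lborel \<Otimes>\<^sub>M M)" by simp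
    then show ?thesis
      using u v F by (intro borel_measurable_divide borel_measurable_diff)
  qed
  fix p :: "real \<times> 'a" assume "p \<in> space (lborel \<Otimes>\<^sub>M M)"
  then have "snd p \<in> space M" by (auto simp: space_pair_measure)
  from der[OF this clamp_in_unit_interval]
  have "((\<lambda>s. (F s (snd p) - F (?u p) (snd p)) / (s - ?u p)) \<longlongrightarrow> G (?u p) (snd p))
      (at (?u p) within {0..1})"
    by (simp add: has_field_derivative_iff)
  then have "(\<lambda>n. (F (?v n p) (snd p) - F (?u p) (snd p)) / (?v n p - ?u p)) \<longlonglongrightarrow> G (?u p) (snd p)"
    by (rule filterlim_compose[OF _ filterlim_inward_step[OF clamp_in_unit_interval]])
  moreover have "clamp 0 1 (?v n p) = ?v n p" for n
    by (rule clamp_eq_self[OF inward_step_in_unit_interval[OF clamp_in_unit_interval]])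
  ultimately show "(\<lambda>n. (F (clamp 0 1 (?v n p)) (snd p) - F (?u p) (snd p)) / (?v n p - ?u p))
      \<longlonglongrightarrow> G (?u p) (snd p)"
    by simp
qed

lemma (in sigma_finite_measure) AE_AE_zero_if_integral_square_zero:
  fixes F :: "real \<Rightarrow> 'a \<Rightarrow> real"
  assumes F: "(\<lambda>p. F (clamp 0 1 (fst p)) (snd p)) \<in> borel_measurable (lborel \<Otimes>\<^sub>M M)"
    and zero: "(\<integral>\<^sup>+ t. indicator {0..1} t * (\<integral>\<^sup>+ \<omega>. ennreal ((F t \<omega>)\<^sup>2) \<partial>M) \<partial>lborel) = 0"
  shows "AE \<omega> in M. AE t in lborel. t \<in> {0..1} \<longrightarrow> F t \<omega> = 0"
proof -
  interpret pair_sigma_finite lborel M ..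
  note F[measurable]
  have [measurable]: "(\<lambda>p. F (clamp 0 1 (snd p)) (fst p)) \<in> borel_measurable (M \<Otimes>\<^sub>M lborel)"
    using measurable_compose[OF measurable_Pair[OF measurable_snd measurable_fst] F] by simp
  define H where "H t \<omega> = indicator {0..1::real} t * ennreal ((F (clamp 0 1 t) \<omega>)\<^sup>2)" for t \<omega>
  have H: "case_prod H \<in> borel_measurable (lborel \<Otimes>\<^sub>M M)"
    unfolding H_def by measurable
  have "indicator {0..1} t * (\<integral>\<^sup>+ \<omega>. ennreal ((F t \<omega>)\<^sup>2) \<partial>M) = (\<integral>\<^sup>+ \<omega>. H t \<omega> \<partial>M)" for t
    by (cases "t \<in> {0..1}") (simp_all add: H_def)
  then have "(\<integral>\<^sup>+ \<omega>. (\<integral>\<^sup>+ t. H t \<omega> \<partial>lborel) \<partial>M) = 0"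
    using zero Fubini'[OF H] by simp
  moreover have "(\<lambda>\<omega>. \<integral>\<^sup>+ t. H t \<omega> \<partial>lborel) \<in> borel_measurable M"
    unfolding H_def by measurable
  ultimately have "AE \<omega> in M. (\<integral>\<^sup>+ t. H t \<omega> \<partial>lborel) = 0"
    by (simp add: nn_integral_0_iff_AE)
  then show ?thesis
  proof (rule AE_mp[OF _ AE_I2], intro impI)
    fix \<omega> assume \<omega>: "\<omega> \<in> space M" and "(\<integral>\<^sup>+ t. H t \<omega> \<partial>lborel) = 0"
    moreover have "(\<lambda>t. H t \<omega>) \<in> borel_measurable lborel"
      using measurable_compose[OF measurable_Pair2'[OF \<omega>] H] by simp
    ultimately have "AE t in lborel. H t \<omega> = 0"
      by (simp add: nn_integral_0_iff_AE)
    then show "AE t in lborel. t \<in> {0..1} \<longrightarrow> F t \<omega> = 0"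
      by eventually_elim (auto simp: H_def)
  qed
qed

lemma (in sigma_finite_measure) AE_paths_affine:
  fixes X Xd Xdd :: "real \<Rightarrow> 'a \<Rightarrow> real"
  assumes X: "\<And>t. t \<in> {0..1} \<Longrightarrow> X t \<in> borel_measurable M"
    and d1: "\<And>\<omega> t. \<omega> \<in> space M \<Longrightarrow> t \<in> {0..1} \<Longrightarrow>
      ((\<lambda>s. X s \<omega>) has_real_derivative Xd t \<omega>) (at t within {0..1})"
    and d2: "\<And>\<omega> t. \<omega> \<in> space M \<Longrightarrow> t \<in> {0..1} \<Longrightarrow>
      ((\<lambda>s. Xd s \<omega>) has_real_derivative Xdd t \<omega>) (at t within {0..1})"
    and zero: "(\<integral>\<^sup>+ t. indicator {0..1} t * (\<integral>\<^sup>+ \<omega>. ennreal ((Xdd t \<omega>)\<^sup>2) \<partial>M) \<partial>lborel) = 0"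
  shows "AE \<omega> in M. \<forall>t\<in>{0..1}. X t \<omega> = (1 - t) * X 0 \<omega> + t * X 1 \<omega>"
proof -
  have cont: "continuous_on {0..1} (\<lambda>s. X s \<omega>)" if "\<omega> \<in> space M" for \<omega>
    using d1[OF that] by (rule DERIV_continuous_on)
  have "(\<lambda>p. X (clamp 0 1 (fst p)) (snd p)) \<in> borel_measurable (lborel \<Otimes>\<^sub>M M)"
    by (rule measurable_clamped_continuous_process[where F = X]) (simp_all add: X cont)
  then have "(\<lambda>p. Xd (clamp 0 1 (fst p)) (snd p)) \<in> borel_measurable (lborel \<Otimes>\<^sub>M M)"
    using d1 by (rule measurable_clamped_derivative)
  then have "(\<lambda>p. Xdd (clamp 0 1 (fst p)) (snd p)) \<in> borel_measurable (lborel \<Otimes>\<^sub>M M)"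
    using d2 by (rule measurable_clamped_derivative)
  then have "AE \<omega> in M. AE t in lborel. t \<in> {0..1} \<longrightarrow> Xdd t \<omega> = 0"
    using zero by (rule AE_AE_zero_if_integral_square_zero)
  then show ?thesis
  proof (rule AE_mp[OF _ AE_I2], intro impI ballI)
    fix \<omega> and t :: real
    assume "\<omega> \<in> space M" "AE s in lborel. s \<in> {0..1} \<longrightarrow> Xdd s \<omega> = 0" "t \<in> {0..1}"
    then show "X t \<omega> = (1 - t) * X 0 \<omega> + t * X 1 \<omega>"
      using affine_if_second_derivative_zero_ae[OF d1 d2] by blast
  qed
qed

theorem lemma1:
  fixes M :: "'a measure"
    and X Xd Xdd :: "real \<Rightarrow> 'a \<Rightarrow> real"
    and \<mu>0 \<mu>1 :: "real measure"
  assumes "prob_space M"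
    and "gaussian_measure \<mu>0" and "gaussian_measure \<mu>1"
    and "\<And>t. t \<in> {0..1} \<Longrightarrow> X t \<in> borel_measurable M"
    and "\<And>\<omega> t. \<omega> \<in> space M \<Longrightarrow> t \<in> {0..1} \<Longrightarrow>
           ((\<lambda>s. X s \<omega>) has_real_derivative Xd t \<omega>) (at t within {0..1})"
    and "\<And>\<omega> t. \<omega> \<in> space M \<Longrightarrow> t \<in> {0..1} \<Longrightarrow>
           ((\<lambda>s. Xd s \<omega>) has_real_derivative Xdd t \<omega>) (at t within {0..1})"
    and "distr M borel (X 0) = \<mu>0"
    and "distr M borel (X 1) = \<mu>1"
    and "\<And>t. t \<in> {0..1} \<Longrightarrow> gaussian_measure (distr M borel (X t))"
    and "(\<integral>\<^sup>+ t. indicator {0..1} t * (\<integral>\<^sup>+ \<omega>. ennreal ((Xdd t \<omega>)\<^sup>2) \<partial>M) \<partial>lborel) = 0"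
  shows "jointly_gaussian M (X 0) (X 1)"
proof -
  interpret prob_space M by (rule assms(1))
  have affine: "AE \<omega> in M. \<forall>t\<in>{0..1}. X t \<omega> = (1 - t) * X 0 \<omega> + t * X 1 \<omega>"
    using assms(4-6,10) by (rule AE_paths_affine)
  have X0: "X 0 \<in> borel_measurable M" and X1: "X 1 \<in> borel_measurable M"
    using assms(4) by auto
  have "gaussian_measure (distr M borel (\<lambda>\<omega>. (1 - t) * X 0 \<omega> + t * X 1 \<omega>))" if t: "t \<in> {0..1}" for t
  proof -
    have "AE \<omega> in M. (1 - t) * X 0 \<omega> + t * X 1 \<omega> = X t \<omega>"
      by (rule eventually_mono[OF affine]) (metis t)
    then have "distr M borel (\<lambda>\<omega>. (1 - t) * X 0 \<omega> + t * X 1 \<omega>) = distr M borel (X t)"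
      using X0 X1 assms(4)[OF t] by (intro distr_cong_AE) auto
    then show ?thesis using assms(9)[OF t] by simp
  qed
  then have "gaussian_measure (distr M borel (\<lambda>\<omega>. a * X 0 \<omega> + b * X 1 \<omega>))" for a b
    by (rule gaussian_law_lincomb_if_convex_combinations[OF X0 X1])
  then show ?thesis
    unfolding jointly_gaussian_def by blast
qed

end
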